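(* Let $S:\mathbb{R}^m\times\mathbb{R}^n\to\mathbb{R}^q$ be bilinear with lifted operator $\mathscr{S}$, let $\mathcal{K}'\subseteq\mathbb{R}^{m\times n}$ and $\mathcal{M}=\mathcal{K}'-\mathcal{K}'$. Let $X\in\mathcal{N}(\mathscr{S},2)\cap\mathcal{M}\setminus\{0\}$ be a given matrix and $\delta\in(0,1)$. Let $\mathbf{M}=xy^T=\sigma uv^T$ be a random rank one matrix with $u=x/\|x\|_2$, $v=y/\|y\|_2$, where $x\in\mathbb{R}^m,y\in\mathbb{R}^n$ satisfy: (A1) $x$ and $y$ each have zero mean and identity covariance; (A2) $x$ and $y$ are independent; and $\|x\|_2\ge r_x$ a.s. and $\|y\|_2\ge r_y$ a.s. for constants $r_x,r_y>0$. Then $\Pr(\|P_{\mathcal{C}(X)}u\|_2^2\ge1-\delta)\le\frac{2}{r_x^2(1-\delta)}$ and $\Pr(\|P_{\mathcal{R}(X)}v\|_2^2\ge1-\delta)\le\frac{2}{r_y^2(1-\delta)}$.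
   Context: For $j=1,\dots,q$ let $S_j$ be the unique matrix with $(S(x,y))_j=x^TS_jy$; the lifted operator is $(\mathscr{S}(W))_j=\operatorname{tr}(S_j^TW)$. $\mathcal{N}(\mathscr{S},k)=\{X:\operatorname{rank}(X)\le k,\ \mathscr{S}(X)=0\}$; $\mathcal{K}'-\mathcal{K}'=\{X_1-X_2:X_1,X_2\in\mathcal{K}'\}$. $\mathcal{C}(X)$, $\mathcal{R}(X)$ are column and row spaces; $P_{\mathcal{V}}$ is orthogonal projection onto $\mathcal{V}$. *)

theory Defs
  imports "HOL-Analysis.Analysis" "HOL-Probability.Probability"
begin

text \<open>The matrix S_j of a bilinear map S, characterised by (S(x,y))_j = x^T S_j y.\<close>
definition bilin_mat :: "(real^'m \<Rightarrow> real^'n \<Rightarrow> real^'q) \<Rightarrow> 'q \<Rightarrow> real^'n^'m" where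
  "bilin_mat S j = (\<chi> a b. (S (axis a 1) (axis b 1)) $ j)"

definition lifted_op :: "(real^'m \<Rightarrow> real^'n \<Rightarrow> real^'q) \<Rightarrow> real^'n^'m \<Rightarrow> real^'q" where
  "lifted_op S W = (\<chi> j. trace (transpose (bilin_mat S j) ** W))"

definition null_set :: "(real^'m \<Rightarrow> real^'n \<Rightarrow> real^'q) \<Rightarrow> nat \<Rightarrow> (real^'n^'m) set" where
  "null_set S k = {X. rank X \<le> k \<and> lifted_op S X = 0}"

definition set_diff_minus :: "(real^'n^'m) set \<Rightarrow> (real^'n^'m) set" where
  "set_diff_minus K = {X1 - X2 | X1 X2. X1 \<in> K \<and> X2 \<in> K}"

definition orth_proj :: "'a::real_inner set \<Rightarrow> 'a \<Rightarrow> 'a" where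
  "orth_proj V u = (THE p. p \<in> V \<and> (\<forall>w\<in>V. inner (u - p) w = 0))"

definition col_space :: "real^'n^'m \<Rightarrow> (real^'m) set" where
  "col_space X = span (columns X)"

definition row_space :: "real^'n^'m \<Rightarrow> (real^'n) set" where
  "row_space X = span (rows X)"

end

theory Submission imports Defs begin

text \<open>For an isotropic random vector x and a subspace V with orthonormal basis B,
  E |P_V x|^2 = sum over b in B of E (x \<bullet> b)^2 = dim V. If |P_V u|^2 \<ge> 1 - \<delta> for u = x / |x|,
  then |P_V x|^2 \<ge> (1 - \<delta>) r^2, so Markov's inequality bounds the probability of this event
  by dim V / (r^2 (1 - \<delta>)). Column and row space of a matrix of rank at most 2 have dimension at
  most 2.\<close>

lemma finite_orthonormal_basis_subspace:
  fixes V :: "'a::euclidean_space set"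
  assumes "subspace V"
  obtains B where "finite B" "pairwise orthogonal B" "\<And>b. b \<in> B \<Longrightarrow> norm b = 1"
    "card B = dim V" "span B = V"
  by (metis orthonormal_basis_subspace[OF assms] independent_imp_finite)

lemma orth_proj_orthonormal_basis:
  fixes V :: "'a::euclidean_space set"
  assumes B: "finite B" "pairwise orthogonal B" "\<And>b. b \<in> B \<Longrightarrow> norm b = 1" "span B = V"
  shows "orth_proj V u = (\<Sum>b\<in>B. inner u b *\<^sub>R b)"
proof -
  define p where "p = (\<Sum>b\<in>B. inner u b *\<^sub>R b)"
  have pV: "p \<in> V"
    unfolding p_def B(4)[symmetric] by (intro span_sum span_scale span_base)
  have orth_basis: "inner (u - p) b' = 0" if "b' \<in> B" for b'
  proof -
    have "inner p b' = (\<Sum>b\<in>B. inner u b * inner b b')"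
      unfolding p_def by (simp add: inner_sum_left)
    also have "\<dots> = (\<Sum>b\<in>{b'}. inner u b * inner b b')"
      using B(1,2) that by (intro sum.mono_neutral_right) (auto simp: pairwise_def orthogonal_def)
    also have "\<dots> = inner u b'"
      using B(3)[OF that] by (simp add: dot_square_norm)
    finally show ?thesis by (simp add: inner_diff_left)
  qed
  have orth: "\<forall>w\<in>V. inner (u - p) w = 0"
  proof
    fix w assume "w \<in> V"
    then have "w \<in> span B" using B(4) by simp
    then show "inner (u - p) w = 0"
      by (induction rule: span_induct_alt) (simp_all add: orth_basis inner_add_right)
  qed
  have "orth_proj V u = p"
    unfolding orth_proj_def
  proof (rule the_equality)
    show "p \<in> V \<and> (\<forall>w\<in>V. inner (u - p) w = 0)" using pV orth by blast
  next
    fix q assume q: "q \<in> V \<and> (\<forall>w\<in>V. inner (u - q) w = 0)"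
    have "p - q \<in> V" using pV q B(4) span_diff[of p B q] by simp
    then have "inner (u - q) (p - q) = 0" "inner (u - p) (p - q) = 0" using q orth by auto
    then have "inner (p - q) (p - q) = 0" by (simp add: inner_diff_left inner_diff_right)
    then show "q = p" by simp
  qed
  then show ?thesis by (simp add: p_def)
qed

lemma power2_norm_sum_orthonormal:
  fixes B :: "'a::real_inner set"
  assumes "finite B" "pairwise orthogonal B" "\<And>b. b \<in> B \<Longrightarrow> norm b = 1"
  shows "(norm (\<Sum>b\<in>B. c b *\<^sub>R b))\<^sup>2 = (\<Sum>b\<in>B. (c b)\<^sup>2)"
proof -
  have "pairwise (\<lambda>i j. orthogonal (c i *\<^sub>R i) (c j *\<^sub>R j)) B"
    using assms(2) by (intro pairwise_ortho_scaleR) (simp add: pairwise_def)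
  from norm_sum_Pythagorean[OF assms(1) this] show ?thesis
    using assms(3) by (simp add: power_mult_distrib)
qed

lemma power2_norm_orth_proj_orthonormal_basis:
  fixes V :: "'a::euclidean_space set"
  assumes "finite B" "pairwise orthogonal B" "\<And>b. b \<in> B \<Longrightarrow> norm b = 1" "span B = V"
  shows "(norm (orth_proj V u))\<^sup>2 = (\<Sum>b\<in>B. (inner u b)\<^sup>2)"
  using orth_proj_orthonormal_basis[OF assms] power2_norm_sum_orthonormal[OF assms(1-3)] by simp

lemma integral_inner_power2_isotropic:
  fixes x :: "'a \<Rightarrow> real^'m"
  assumes cov: "\<And>i j. integrable M (\<lambda>\<omega>. x \<omega> $ i * x \<omega> $ j) \<and>
                 (\<integral>\<omega>. x \<omega> $ i * x \<omega> $ j \<partial>M) = (if i = j then 1 else 0)"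
  shows "integrable M (\<lambda>\<omega>. (inner (x \<omega>) b)\<^sup>2)"
    and "(\<integral>\<omega>. (inner (x \<omega>) b)\<^sup>2 \<partial>M) = (norm b)\<^sup>2"
proof -
  have expand: "(inner (x \<omega>) b)\<^sup>2 = (\<Sum>i\<in>UNIV. \<Sum>j\<in>UNIV. (b$i * b$j) * (x \<omega> $ i * x \<omega> $ j))" for \<omega>
    by (simp add: inner_vec_def power2_eq_square sum_product algebra_simps)
  show "integrable M (\<lambda>\<omega>. (inner (x \<omega>) b)\<^sup>2)"
    unfolding expand using cov by (intro Bochner_Integration.integrable_sum integrable_mult_right) auto
  have "(\<integral>\<omega>. (inner (x \<omega>) b)\<^sup>2 \<partial>M)
        = (\<Sum>i\<in>UNIV. \<Sum>j\<in>UNIV. (b$i * b$j) * (if i = j then 1 else 0))"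
    unfolding expand using cov by (simp add: integral_sum integrable_sum)
  also have "\<dots> = (\<Sum>i\<in>UNIV. b$i * b$i)"
    by (simp add: if_distrib[of "(*) _"] cong: if_cong)
  also have "\<dots> = (norm b)\<^sup>2"
    by (simp add: power2_norm_eq_inner inner_vec_def)
  finally show "(\<integral>\<omega>. (inner (x \<omega>) b)\<^sup>2 \<partial>M) = (norm b)\<^sup>2" .
qed

lemma integral_power2_norm_orth_proj_isotropic:
  fixes V :: "(real^'m) set" and x :: "'a \<Rightarrow> real^'m"
  assumes "subspace V"
    and cov: "\<And>i j. integrable M (\<lambda>\<omega>. x \<omega> $ i * x \<omega> $ j) \<and>
                 (\<integral>\<omega>. x \<omega> $ i * x \<omega> $ j \<partial>M) = (if i = j then 1 else 0)"
  shows "integrable M (\<lambda>\<omega>. (norm (orth_proj V (x \<omega>)))\<^sup>2)"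
    and "(\<integral>\<omega>. (norm (orth_proj V (x \<omega>)))\<^sup>2 \<partial>M) = dim V"
proof -
  obtain B where B: "finite B" "pairwise orthogonal B" "\<And>b. b \<in> B \<Longrightarrow> norm b = 1"
      "card B = dim V" "span B = V"
    using finite_orthonormal_basis_subspace[OF assms(1)] by blast
  note proj = power2_norm_orth_proj_orthonormal_basis[OF B(1,2,3,5)]
  note moments = integral_inner_power2_isotropic[OF cov]
  show "integrable M (\<lambda>\<omega>. (norm (orth_proj V (x \<omega>)))\<^sup>2)"
    using moments by (simp add: proj)
  show "(\<integral>\<omega>. (norm (orth_proj V (x \<omega>)))\<^sup>2 \<partial>M) = dim V"
    using moments B(3,4) by (simp add: proj integral_sum)
qed

lemma power2_norm_orth_proj_scaleR:
  fixes V :: "'a::euclidean_space set"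
  assumes "subspace V"
  shows "(norm (orth_proj V (c *\<^sub>R u)))\<^sup>2 = c\<^sup>2 * (norm (orth_proj V u))\<^sup>2"
proof -
  obtain B where B: "finite B" "pairwise orthogonal B" "\<And>b. b \<in> B \<Longrightarrow> norm b = 1"
      "card B = dim V" "span B = V"
    using finite_orthonormal_basis_subspace[OF assms] by blast
  show ?thesis
    using power2_norm_orth_proj_orthonormal_basis[OF B(1,2,3,5)]
    by (simp add: power_mult_distrib sum_distrib_left)
qed

lemma measure_orth_proj_direction_large:
  fixes V :: "(real^'m) set" and x :: "'a \<Rightarrow> real^'m"
  assumes "subspace V" "dim V \<le> k" "\<delta> < 1" "prob_space P"
    and [measurable]: "x \<in> borel_measurable P"
    and cov: "\<And>i j. integrable P (\<lambda>\<omega>. x \<omega> $ i * x \<omega> $ j) \<and>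
                 (\<integral>\<omega>. x \<omega> $ i * x \<omega> $ j \<partial>P) = (if i = j then 1 else 0)"
    and "0 < r" and norm_ge: "AE \<omega> in P. norm (x \<omega>) \<ge> r"
  shows "measure P {\<omega> \<in> space P. (norm (orth_proj V (x \<omega> /\<^sub>R norm (x \<omega>))))\<^sup>2 \<ge> 1 - \<delta>}
           \<le> k / (r\<^sup>2 * (1 - \<delta>))"
proof -
  interpret prob_space P by fact
  define u where "u \<omega> = (norm (orth_proj V (x \<omega>)))\<^sup>2" for \<omega>
  define c where "c = r\<^sup>2 * (1 - \<delta>)"
  have c_pos: "c > 0" unfolding c_def using assms by simp
  note u_int = integral_power2_norm_orth_proj_isotropic[OF assms(1) cov, folded u_def]
  have [measurable]: "u \<in> borel_measurable P" using u_int(1) by (rule borel_measurable_integrable)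
  let ?E = "{\<omega> \<in> space P. (norm (orth_proj V (x \<omega> /\<^sub>R norm (x \<omega>))))\<^sup>2 \<ge> 1 - \<delta>}"
  let ?F = "{\<omega> \<in> space P. u \<omega> \<ge> c}"
  have F_sets: "?F \<in> sets P" by measurable
  have "AE \<omega> in P. \<omega> \<in> ?E \<longrightarrow> \<omega> \<in> ?F"
    using norm_ge
  proof eventually_elim
    case (elim \<omega>)
    show ?case
    proof
      assume "\<omega> \<in> ?E"
      moreover have "norm (x \<omega>) > 0" using elim \<open>0 < r\<close> by linarith
      ultimately have "1 - \<delta> \<le> u \<omega> / (norm (x \<omega>))\<^sup>2"
        by (simp add: u_def power2_norm_orth_proj_scaleR[OF assms(1)] field_simps)
      then have "(1 - \<delta>) * (norm (x \<omega>))\<^sup>2 \<le> u \<omega>"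
        using \<open>norm (x \<omega>) > 0\<close> by (simp add: pos_le_divide_eq)
      moreover have "c \<le> (1 - \<delta>) * (norm (x \<omega>))\<^sup>2"
        unfolding c_def using elim \<open>0 < r\<close> \<open>\<delta> < 1\<close> by (simp add: power_mono)
      ultimately have "c \<le> u \<omega>" by linarith
      then show "\<omega> \<in> ?F" using \<open>\<omega> \<in> ?E\<close> by simp
    qed
  qed
  then have "measure P ?E \<le> measure P ?F"
    using F_sets by (rule finite_measure_mono_AE)
  also have "\<dots> \<le> (\<integral>\<omega>. u \<omega> \<partial>P) / c"
    by (rule integral_Markov_inequality_measure[OF u_int(1) F_sets _ c_pos]) (simp add: u_def)
  also have "\<dots> \<le> k / c"
    using u_int(2) assms(2) c_pos by (simp add: divide_right_mono)
  finally show ?thesis by (simp add: c_def)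
qed

theorem lemma2:
  fixes S :: "real^'m \<Rightarrow> real^'n \<Rightarrow> real^'q"
    and K' :: "(real^'n^'m) set"
    and X :: "real^'n^'m"
    and \<delta> r\<^sub>x r\<^sub>y :: real
    and P :: "'a measure"
    and x :: "'a \<Rightarrow> real^'m"
    and y :: "'a \<Rightarrow> real^'n"
  assumes "bilinear S"
    and "X \<in> null_set S 2 \<inter> set_diff_minus K' - {0}"
    and "0 < \<delta>" and "\<delta> < 1"
    and "prob_space P"
    and "x \<in> borel_measurable P" and "y \<in> borel_measurable P"
    and "\<And>i. integrable P (\<lambda>\<omega>. x \<omega> $ i) \<and> (\<integral>\<omega>. x \<omega> $ i \<partial>P) = 0"
    and "\<And>i j. integrable P (\<lambda>\<omega>. x \<omega> $ i * x \<omega> $ j) \<and>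
               (\<integral>\<omega>. x \<omega> $ i * x \<omega> $ j \<partial>P) = (if i = j then 1 else 0)"
    and "\<And>i. integrable P (\<lambda>\<omega>. y \<omega> $ i) \<and> (\<integral>\<omega>. y \<omega> $ i \<partial>P) = 0"
    and "\<And>i j. integrable P (\<lambda>\<omega>. y \<omega> $ i * y \<omega> $ j) \<and>
               (\<integral>\<omega>. y \<omega> $ i * y \<omega> $ j \<partial>P) = (if i = j then 1 else 0)"
    and "prob_space.indep_set P (sets (vimage_algebra (space P) x borel)) (sets (vimage_algebra (space P) y borel))"
    and "0 < r\<^sub>x" and "0 < r\<^sub>y"
    and "AE \<omega> in P. norm (x \<omega>) \<ge> r\<^sub>x"
    and "AE \<omega> in P. norm (y \<omega>) \<ge> r\<^sub>y"
  shows "measure P {\<omega> \<in> space P.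
            (norm (orth_proj (col_space X) (x \<omega> /\<^sub>R norm (x \<omega>))))\<^sup>2 \<ge> 1 - \<delta>}
           \<le> 2 / (r\<^sub>x\<^sup>2 * (1 - \<delta>))
       \<and> measure P {\<omega> \<in> space P.
            (norm (orth_proj (row_space X) (y \<omega> /\<^sub>R norm (y \<omega>))))\<^sup>2 \<ge> 1 - \<delta>}
           \<le> 2 / (r\<^sub>y\<^sup>2 * (1 - \<delta>))"
proof -
  have "rank X \<le> 2" using assms(2) unfolding null_set_def by auto
  then have "dim (col_space X) \<le> 2" "dim (row_space X) \<le> 2"
    unfolding col_space_def row_space_def
    by (simp add: dim_span column_rank_def, simp add: dim_span row_rank_def)
  moreover have "subspace (col_space X)" "subspace (row_space X)"
    unfolding col_space_def row_space_def by simp_all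
  ultimately show ?thesis
    using measure_orth_proj_direction_large[where k = 2, OF _ _ assms(4,5,6,9,13,15)]
      measure_orth_proj_direction_large[where k = 2, OF _ _ assms(4,5,7,11,14,16)]
    by simp
qed

end
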